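(* For every integer $n\ge 1$, $$\sum_{m=0}^{n-1}(3m+1)(-16)^{n-m-1}\binom{2m}{m} f_m=\binom{2n}{n}\sum_{k=0}^{n-1}\binom{n+2k}{3k}\binom{3k}{k}\binom{2k}{k}\frac{n(k-n)(-4)^{n-k}}{8(2k+1)}.$$
   Context: The Franel numbers are defined by $f_n=\sum_{k=0}^n \binom{n}{k}^3$ for integers $n\ge 0$. Binomial coefficients $\binom{a}{b}$ for nonnegative integers $a,b$ are the usual ones, with $\binom{a}{b}=0$ when $b>a$. *)

theory Defs
  imports Complex_Main
begin

definition franel :: "nat \<Rightarrow> nat" where
  "franel n = (\<Sum>k=0..n. (n choose k) ^ 3)"

end

theory Submission
  imports Defs
begin

(* 1. The Franel numbers satisfy (n+2)^2 f(n+2) = (7n^2+21n+16) f(n+1) + 8 (n+1)^2 f(n);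
      this is proved by creative telescoping with an explicit Zeilberger certificate.
   2. The sum t_n = sum_k C(n+2k,3k) C(3k,k) C(2k,k) (-4)^(n-k) satisfies the same recurrence
      (again by an explicit certificate, using the shift relations of its terms) and has the
      same initial values, so f_n = t_n.
   3. With f_n = t_n, a termwise identity shows that the right-hand side R(n) satisfies
      R(n+1) + 16 R(n) = (3n+1) C(2n,n) f_n.  The left-hand side L(n) obeys the same
      first-order recurrence, and L(0) = R(0) = 0, so L = R. *)

lemma recurrence_unique:
  fixes a b :: "nat \<Rightarrow> 'a::field"
  assumes lead: "\<And>n. p n \<noteq> 0"
    and rec_a: "\<And>n. p n * a (n+2) = q n * a (n+1) + r n * a n"
    and rec_b: "\<And>n. p n * b (n+2) = q n * b (n+1) + r n * b n"
    and init: "a 0 = b 0" "a 1 = b 1"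
  shows "a n = b n"
proof -
  have "a n = b n \<and> a (n+1) = b (n+1)"
  proof (induction n)
    case 0 show ?case using init by simp
  next
    case (Suc n)
    have "p n * a (n+2) = p n * b (n+2)" using rec_a[of n] rec_b[of n] Suc by simp
    then have "a (n+2) = b (n+2)" using lead[of n] by simp
    then show ?case using Suc by simp
  qed
  then show ?thesis by simp
qed

lemma sum_telescope_zero:
  fixes G :: "nat \<Rightarrow> 'a::ab_group_add"
  assumes "\<And>k. k < M \<Longrightarrow> F k = G (Suc k) - G k" "G 0 = 0" "G M = 0"
  shows "(\<Sum>k<M. F k) = 0"
proof -
  have "(\<Sum>k<M. F k) = (\<Sum>k<M. G (Suc k) - G k)" using assms(1) by (rule sum.cong[OF refl]) simp
  also have "\<dots> = 0" using assms(2,3) by (simp only: sum_lessThan_telescope) simp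
  finally show ?thesis .
qed

lemma recurrence_by_telescoping:
  fixes t G :: "nat \<Rightarrow> nat \<Rightarrow> 'a::comm_ring"
  assumes support: "\<And>n k. n < k \<Longrightarrow> t n k = 0"
    and cert: "\<And>n k. P n * t (n+2) k - Q n * t (n+1) k - R n * t n k = G n (Suc k) - G n k"
    and boundary: "G n 0 = 0" "G n (n+3) = 0"
  shows "P n * (\<Sum>k\<le>n+2. t (n+2) k) = Q n * (\<Sum>k\<le>n+1. t (n+1) k) + R n * (\<Sum>k\<le>n. t n k)"
proof -
  have ext: "(\<Sum>k\<le>m. t m k) = (\<Sum>k<n+3. t m k)" if "m \<le> n+2" for m
    by (rule sum.mono_neutral_left) (use that support in auto)
  have ext2: "(\<Sum>k\<le>n+2. t (n+2) k) = (\<Sum>k<n+3. t (n+2) k)"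
    and ext1: "(\<Sum>k\<le>n+1. t (n+1) k) = (\<Sum>k<n+3. t (n+1) k)"
    and ext0: "(\<Sum>k\<le>n. t n k) = (\<Sum>k<n+3. t n k)" by (rule ext; simp)+
  have "P n * (\<Sum>k\<le>n+2. t (n+2) k) - Q n * (\<Sum>k\<le>n+1. t (n+1) k) - R n * (\<Sum>k\<le>n. t n k)
      = (\<Sum>k<n+3. P n * t (n+2) k - Q n * t (n+1) k - R n * t n k)"
    unfolding ext0 ext1 ext2 by (simp only: sum_distrib_left sum_subtractf)
  also have "\<dots> = 0"
    by (rule sum_telescope_zero[where G="G n"]) (use cert boundary in auto)
  finally show ?thesis by (simp add: algebra_simps)
qed

(* Shifts of the upper index of a binomial coefficient, in a ring; the first holds for
   all k since both sides vanish when k > m + 1. *)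
lemma binomial_top_step:
  "(of_nat (Suc m) - of_nat k) * of_nat (Suc m choose k) = (of_nat (Suc m) :: 'a::comm_ring_1) * of_nat (m choose k)"
proof (cases "k \<le> Suc m")
  case True
  have "of_nat ((Suc m - k) * (Suc m choose k)) = (of_nat (Suc m * (m choose k)) :: 'a)"
    using binomial_absorb_comp[of "Suc m" k] by (simp only: diff_Suc_1)
  then show ?thesis using True by (simp only: of_nat_mult of_nat_diff)
qed (simp add: binomial_eq_0)

lemma binomial_diag_step:
  "of_nat (Suc k) * of_nat (Suc m choose Suc k) = (of_nat (Suc m) :: 'a::comm_ring_1) * of_nat (m choose k)"
proof -
  have "of_nat (Suc k * (Suc m choose Suc k)) = (of_nat (Suc m * (m choose k)) :: 'a)"
    by (simp only: Suc_times_binomial)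
  then show ?thesis by (simp only: of_nat_mult)
qed

definition franel_cert_poly :: "'a::comm_ring_1 \<Rightarrow> 'a \<Rightarrow> 'a" where
  "franel_cert_poly x y = -72 + 78*y - 30*y^2 + 4*y^3 - x*(128 - 93*y + 18*y^2) - x^2*(74 - 27*y) - 14*x^3"

(* The certificate identity, with the common factor b^3 / (x+1) removed. *)
lemma franel_cert_poly_identity:
  fixes x y :: "'a::comm_ring_1"
  shows "(x+1) * ((x+2)^5 - (7*x^2+21*x+16)*(x+2-y)^3) - 8*((x+1-y)*(x+2-y))^3
       = (x+2-y)^3 * franel_cert_poly x (y+1) - y^3 * franel_cert_poly x y"
  unfolding franel_cert_poly_def by (simp add: algebra_simps power2_eq_square power3_eq_cube eval_nat_numeral)

definition franel_cert :: "nat \<Rightarrow> nat \<Rightarrow> rat" where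
  "franel_cert n k = (if k = 0 then 0
     else of_nat (Suc n choose (k-1))^3 * franel_cert_poly (of_nat n) (of_nat k) / (of_nat n + 1))"

(* Every binomial coefficient involved is a multiple of b = C(n+2,k)/(n+2); the claim
   thereby reduces to the polynomial identity above. *)
lemma franel_cert_step:
  "(of_nat n+2)^2 * of_nat (n+2 choose k)^3 - (7*of_nat n^2+21*of_nat n+16) * of_nat (n+1 choose k)^3
     - 8*(of_nat n+1)^2 * of_nat (n choose k)^3 = franel_cert n (Suc k) - franel_cert n k"
proof -
  define x where "x = (of_nat n :: rat)"
  define y where "y = (of_nat k :: rat)"
  define b where "b = of_nat (n+2 choose k) / (x+2)"
  have pos: "x+1 \<noteq> 0" "x+2 \<noteq> 0" unfolding x_def by (simp_all add: add_nonneg_eq_0_iff)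
  have c2: "of_nat (n+2 choose k) = (x+2) * b" unfolding b_def using pos by simp
  have "(x+2-y) * of_nat (n+2 choose k) = (x+2) * of_nat (n+1 choose k)"
    using binomial_top_step[of "n+1" k, where 'a=rat] by (simp add: x_def y_def add.commute)
  then have "(x+2) * of_nat (n+1 choose k) = (x+2) * ((x+2-y) * b)"
    unfolding c2 by (simp add: algebra_simps)
  then have c1: "of_nat (n+1 choose k) = (x+2-y) * b" using pos by simp
  have "(x+1-y) * of_nat (n+1 choose k) = (x+1) * of_nat (n choose k)"
    using binomial_top_step[of n k, where 'a=rat] by (simp add: x_def y_def add.commute)
  then have c0: "of_nat (n choose k) = (x+1-y) * (x+2-y) * b / (x+1)"
    using pos unfolding c1 by (simp add: field_simps)
  have cert_k: "franel_cert n k = (y*b)^3 * franel_cert_poly x y / (x+1)"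
  proof (cases k)
    case (Suc j)
    have "y * of_nat (n+2 choose k) = (x+2) * of_nat (n+1 choose j)"
      using binomial_diag_step[of j "n+1", where 'a=rat] by (simp add: x_def y_def Suc add.commute)
    then have "(x+2) * of_nat (n+1 choose j) = (x+2) * (y * b)" unfolding c2 by (simp add: algebra_simps)
    then have "of_nat (n+1 choose j) = y * b" using pos by simp
    then show ?thesis unfolding franel_cert_def Suc x_def y_def by simp
  qed (simp add: franel_cert_def y_def)
  have cert_Suc: "franel_cert n (Suc k) = ((x+2-y)*b)^3 * franel_cert_poly x (y+1) / (x+1)"
    unfolding franel_cert_def using c1 by (simp add: x_def y_def add.commute)
  have lhs: "(x+2)^2 * ((x+2)*b)^3 - (7*x^2+21*x+16) * ((x+2-y)*b)^3
        - 8*(x+1)^2 * ((x+1-y) * (x+2-y) * b / (x+1))^3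
      = b^3 / (x+1) * ((x+1) * ((x+2)^5 - (7*x^2+21*x+16)*(x+2-y)^3) - 8*((x+1-y)*(x+2-y))^3)"
    using pos by (simp add: power_divide field_simps) algebra
  have rhs: "((x+2-y)*b)^3 * franel_cert_poly x (y+1) / (x+1) - (y*b)^3 * franel_cert_poly x y / (x+1)
      = b^3 / (x+1) * ((x+2-y)^3 * franel_cert_poly x (y+1) - y^3 * franel_cert_poly x y)"
    unfolding diff_divide_distrib[symmetric] times_divide_eq_left power_mult_distrib
    by (simp add: algebra_simps)
  show ?thesis
    unfolding c0 c1 c2 cert_k cert_Suc x_def[symmetric] lhs rhs franel_cert_poly_identity ..
qed

theorem franel_recurrence:
  "(of_nat n+2)^2 * of_nat (franel (n+2)) = (7*of_nat n^2+21*of_nat n+16) * of_nat (franel (n+1))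
     + 8*(of_nat n+1)^2 * (of_nat (franel n) :: rat)"
proof -
  have sum: "(of_nat (franel m) :: rat) = (\<Sum>k\<le>m. of_nat (m choose k)^3)" for m
    by (simp add: franel_def atMost_atLeast0)
  show ?thesis unfolding sum
    by (rule recurrence_by_telescoping[where G=franel_cert, OF _ franel_cert_step])
       (simp_all add: franel_cert_def binomial_eq_0 del: binomial_Suc_Suc)
qed

definition franel_alt_term :: "nat \<Rightarrow> nat \<Rightarrow> rat" where
  "franel_alt_term n k = of_nat (n + 2*k choose 3*k) * of_nat (3*k choose k) * of_nat (2*k choose k) * (-4) ^ (n - k)"

lemma franel_alt_term_zero: "n < k \<Longrightarrow> franel_alt_term n k = 0"
  unfolding franel_alt_term_def by simp

lemma franel_alt_term_fact:
  assumes "k \<le> n"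
  shows "franel_alt_term n k = fact (n + 2*k) / (fact (n - k) * fact k ^ 3) * (-4) ^ (n - k)"
proof -
  have b1: "(of_nat (n + 2*k choose 3*k) :: rat) = fact (n + 2*k) / (fact (3*k) * fact (n - k))"
    using binomial_fact[of "3*k" "n + 2*k"] assms by simp
  have b2: "(of_nat (3*k choose k) :: rat) = fact (3*k) / (fact k * fact (2*k))"
    using binomial_fact[of k "3*k"] by simp
  have b3: "(of_nat (2*k choose k) :: rat) = fact (2*k) / (fact k * fact k)"
    using binomial_fact[of k "2*k"] by simp
  show ?thesis unfolding franel_alt_term_def b1 b2 b3 by (simp add: field_simps power3_eq_cube)
qed

lemma franel_alt_term_shift:
  "(of_nat n + 1 - of_nat k) * franel_alt_term (n+1) k = -4 * (of_nat n + 1 + 2 * of_nat k) * franel_alt_term n k"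
proof (cases "k \<le> n")
  case True
  define c where "c = of_nat (3*k choose k) * of_nat (2*k choose k) * (-4 :: rat) ^ (n - k)"
  have "Suc n - k = Suc (n - k)" using True by simp
  then have t1: "franel_alt_term (n+1) k = -4 * c * of_nat (Suc (n + 2*k) choose 3*k)"
    unfolding franel_alt_term_def c_def by simp
  have t0: "franel_alt_term n k = c * of_nat (n + 2*k choose 3*k)"
    unfolding franel_alt_term_def c_def by simp
  have "(of_nat (Suc (n + 2*k)) - of_nat (3*k)) * of_nat (Suc (n + 2*k) choose 3*k)
      = (of_nat (Suc (n + 2*k)) :: rat) * of_nat (n + 2*k choose 3*k)"
    by (rule binomial_top_step)
  then have bin: "(of_nat n + 1 - of_nat k) * of_nat (Suc (n + 2*k) choose 3*k)
      = (of_nat n + 1 + 2 * of_nat k :: rat) * of_nat (n + 2*k choose 3*k)"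
    by (simp add: algebra_simps)
  have "(of_nat n + 1 - of_nat k) * franel_alt_term (n+1) k
      = -4 * c * ((of_nat n + 1 - of_nat k) * of_nat (Suc (n + 2*k) choose 3*k))"
    unfolding t1 by (simp only: ac_simps)
  also have "\<dots> = -4 * (of_nat n + 1 + 2 * of_nat k) * franel_alt_term n k"
    unfolding bin t0 by (simp only: ac_simps)
  finally show ?thesis .
next
  case False
  then show ?thesis by (cases "k = n + 1") (simp_all add: franel_alt_term_zero)
qed

lemma franel_alt_term_diag_shift:
  "(of_nat k + 1)^3 * franel_alt_term (n+2) (k+1)
     = (of_nat n + 2*of_nat k + 2) * (of_nat n + 2*of_nat k + 3) * (of_nat n + 2*of_nat k + 4) * franel_alt_term (n+1) k"
proof (cases "k \<le> n + 1")
  case True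
  have e2: "n + 2 + 2*(k+1) = n + 2*k + 4" "n + 2 - (k+1) = n + 1 - k" by simp_all
  have t2: "franel_alt_term (n+2) (k+1) = fact (n + 2*k + 4) / (fact (n + 1 - k) * fact (k+1) ^ 3) * (-4) ^ (n + 1 - k)"
    unfolding e2[symmetric] by (rule franel_alt_term_fact) (use True in simp)
  have e1: "n + 1 + 2*k = n + 2*k + 1" by simp
  have t1: "franel_alt_term (n+1) k = fact (n + 2*k + 1) / (fact (n + 1 - k) * fact k ^ 3) * (-4) ^ (n + 1 - k)"
    unfolding e1[symmetric] by (rule franel_alt_term_fact) (use True in simp)
  have "n + 2*k + 4 = Suc (Suc (Suc (n + 2*k + 1)))" by simp
  then have f1: "(fact (n + 2*k + 4) :: rat)
      = (of_nat n + 2*of_nat k + 4) * (of_nat n + 2*of_nat k + 3) * (of_nat n + 2*of_nat k + 2) * fact (n + 2*k + 1)"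
    by (simp only: fact_Suc) (simp add: algebra_simps)
  have f2: "(fact (k + 1) :: rat) = (of_nat k + 1) * fact k" by simp
  define A where "A = (fact (n + 2*k + 1) :: rat)"
  define F where "F = (fact (n + 1 - k) :: rat)"
  define K where "K = (fact k :: rat)"
  have "F \<noteq> 0" "K \<noteq> 0" "of_nat k + 1 \<noteq> (0::rat)" unfolding F_def K_def by simp_all
  then show ?thesis unfolding t1 t2 f1 f2 A_def[symmetric] F_def[symmetric] K_def[symmetric] power_mult_distrib
    by (simp add: field_simps)
qed (simp add: franel_alt_term_zero)

lemma franel_alt_cert_poly_identity:
  fixes x y :: "'a::comm_ring_1"
  shows "16*(x+2)^2*(x+2*y+1)*(x+2*y+2) + 4*(7*x^2+21*x+16)*(x+2-y)*(x+2*y+1) - 8*(x+1)^2*(x+1-y)*(x+2-y)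
       = 12*(3*x+5)*(x+2*y+2)*(x+2-y)*(x+2*y+1) + 48*(3*x+5)*y^3"
  by (simp add: algebra_simps power2_eq_square power3_eq_cube)

definition franel_alt_cert :: "nat \<Rightarrow> nat \<Rightarrow> rat" where
  "franel_alt_cert n k = (if k = 0 then 0
     else -3 * (3 * of_nat n + 5) * (of_nat n + 2 * of_nat k) * franel_alt_term (n+1) (k-1))"

(* By the shift relations every term involved is a polynomial multiple of
   w = t(n+2,k) / (16 (n+2k+1) (n+2k+2)); the claim reduces to the identity above. *)
lemma franel_alt_cert_step:
  "(of_nat n+2)^2 * franel_alt_term (n+2) k - (7*of_nat n^2+21*of_nat n+16) * franel_alt_term (n+1) k
     - 8*(of_nat n+1)^2 * franel_alt_term n k = franel_alt_cert n (Suc k) - franel_alt_cert n k"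
proof -
  define x where "x = (of_nat n :: rat)"
  define y where "y = (of_nat k :: rat)"
  define w where "w = franel_alt_term (n+2) k / (16 * (x+2*y+1) * (x+2*y+2))"
  have pos: "x+2*y+1 \<noteq> 0" "x+2*y+2 \<noteq> 0" unfolding x_def y_def by (simp_all add: add_nonneg_eq_0_iff)
  have t2: "franel_alt_term (n+2) k = 16 * (x+2*y+1) * (x+2*y+2) * w"
    unfolding w_def using pos by simp
  have s1: "(x+2-y) * franel_alt_term (n+2) k = -4 * (x+2*y+2) * franel_alt_term (n+1) k"
    using franel_alt_term_shift[of "n+1" k] by (simp add: x_def y_def algebra_simps)
  have "-4 * (x+2*y+2) * franel_alt_term (n+1) k = -4 * (x+2*y+2) * (-4 * (x+2-y) * (x+2*y+1) * w)"
    using s1 unfolding t2 by (simp add: algebra_simps)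
  then have t1: "franel_alt_term (n+1) k = -4 * (x+2-y) * (x+2*y+1) * w" using pos by simp
  have s0: "(x+1-y) * franel_alt_term (n+1) k = -4 * (x+2*y+1) * franel_alt_term n k"
    using franel_alt_term_shift[of n k] by (simp add: x_def y_def algebra_simps)
  have "-4 * (x+2*y+1) * franel_alt_term n k = -4 * (x+2*y+1) * ((x+1-y) * (x+2-y) * w)"
    using s0 unfolding t1 by (simp add: algebra_simps)
  then have t0: "franel_alt_term n k = (x+1-y) * (x+2-y) * w" using pos by simp
  have cert_k: "franel_alt_cert n k = -48 * (3*x+5) * y^3 * w"
  proof (cases k)
    case (Suc i)
    have "y^3 * franel_alt_term (n+2) k = (x+2*y) * (x+2*y+1) * (x+2*y+2) * franel_alt_term (n+1) i"
      using franel_alt_term_diag_shift[of i n] by (simp add: x_def y_def Suc algebra_simps)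
    then have "(x+2*y+1) * (x+2*y+2) * ((x+2*y) * franel_alt_term (n+1) i) = (x+2*y+1) * (x+2*y+2) * (16 * y^3 * w)"
      unfolding t2 by (simp add: algebra_simps)
    then have "(x+2*y) * franel_alt_term (n+1) i = 16 * y^3 * w" using pos by simp
    moreover have "franel_alt_cert n k = -3 * (3*x+5) * ((x+2*y) * franel_alt_term (n+1) i)"
      unfolding franel_alt_cert_def Suc x_def y_def by simp
    ultimately show ?thesis by simp
  qed (simp add: franel_alt_cert_def y_def)
  have cert_Suc: "franel_alt_cert n (Suc k) = -3 * (3*x+5) * (x+2*y+2) * franel_alt_term (n+1) k"
    unfolding franel_alt_cert_def x_def y_def by (simp add: algebra_simps)
  show ?thesis
    unfolding cert_k cert_Suc t0 t1 t2 x_def[symmetric]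
    using arg_cong[OF franel_alt_cert_poly_identity[of x y], of "\<lambda>z. w * z"]
    by (simp add: algebra_simps)
qed

theorem franel_alt_recurrence:
  "(of_nat n+2)^2 * (\<Sum>k\<le>n+2. franel_alt_term (n+2) k)
     = (7*of_nat n^2+21*of_nat n+16) * (\<Sum>k\<le>n+1. franel_alt_term (n+1) k) + 8*(of_nat n+1)^2 * (\<Sum>k\<le>n. franel_alt_term n k)"
  by (rule recurrence_by_telescoping[where G=franel_alt_cert, OF _ franel_alt_cert_step])
     (simp_all add: franel_alt_cert_def franel_alt_term_zero)

theorem franel_alt_sum: "(of_nat (franel n) :: rat) = (\<Sum>k\<le>n. franel_alt_term n k)"
proof (rule recurrence_unique[where p="\<lambda>n. (of_nat n+2)^2"])
  show "(of_nat n + 2)^2 \<noteq> (0::rat)" for n by (simp add: add_nonneg_eq_0_iff)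
qed (use franel_recurrence franel_alt_recurrence in \<open>simp_all add: franel_def franel_alt_term_def numeral_eq_Suc\<close>)

lemma central_binomial_step:
  "(of_nat (2*(n+1) choose (n+1)) :: rat) = 2 * (2*of_nat n + 1) / (of_nat n + 1) * of_nat (2*n choose n)"
proof -
  define x where "x = (of_nat n :: rat)"
  define B0 where "B0 = (of_nat (2*n choose n) :: rat)"
  define B1 where "B1 = (of_nat (2*n+1 choose n) :: rat)"
  define B2 where "B2 = (of_nat (2*(n+1) choose (n+1)) :: rat)"
  have pos: "x + 1 \<noteq> 0" unfolding x_def by (simp add: add_nonneg_eq_0_iff)
  have "(of_nat (2*n+1) - of_nat n) * of_nat (2*n+1 choose n) = (of_nat (2*n+1) :: rat) * of_nat (2*n choose n)"
    using binomial_top_step[of "2*n" n] by (simp only: Suc_eq_plus1)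
  then have top: "(x + 1) * B1 = (2*x + 1) * B0"
    unfolding B0_def[symmetric] B1_def[symmetric] x_def by simp
  have suc: "Suc (2*n+1) = 2*(n+1)" "Suc n = n+1" by simp_all
  have "of_nat (n+1) * B2 = (of_nat (2*(n+1)) :: rat) * B1"
    using binomial_diag_step[of n "2*n+1"] unfolding B1_def B2_def suc .
  then have diag: "(x + 1) * B2 = (x + 1) * (2 * B1)"
    unfolding x_def by (simp add: algebra_simps)
  have "B2 = 2 * B1" using diag pos by simp
  then show ?thesis using top pos unfolding B0_def[symmetric] B2_def[symmetric] x_def[symmetric]
    by (simp add: field_simps)
qed

definition closed_form_summand :: "nat \<Rightarrow> nat \<Rightarrow> rat" where
  "closed_form_summand n k = franel_alt_term n k * (of_nat n * (of_nat k - of_nat n)) / (8 * (2 * of_nat k + 1))"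

lemma closed_form_summand_step:
  "2 * (2*of_nat n + 1) / (of_nat n + 1) * closed_form_summand (n+1) k + 16 * closed_form_summand n k
     = (3 * of_nat n + 1) * franel_alt_term n k"
proof -
  define x where "x = (of_nat n :: rat)"
  define y where "y = (of_nat k :: rat)"
  have pos: "x + 1 \<noteq> 0" "2*y + 1 \<noteq> 0" unfolding x_def y_def by (simp_all add: add_nonneg_eq_0_iff)
  have shift: "(x + 1 - y) * franel_alt_term (n+1) k = -4 * (x + 1 + 2*y) * franel_alt_term n k"
    using franel_alt_term_shift[of n k] unfolding x_def y_def .
  have "closed_form_summand (n+1) k = -((x + 1 - y) * franel_alt_term (n+1) k) * (x + 1) / (8 * (2*y + 1))"
    unfolding closed_form_summand_def x_def y_def by (simp add: algebra_simps)
  also have "\<dots> = (x + 1) * (4 * (x + 1 + 2*y) * franel_alt_term n k / (8 * (2*y + 1)))"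
    unfolding shift by (simp add: algebra_simps)
  finally have "2 * (2*x + 1) / (x + 1) * closed_form_summand (n+1) k
      = 2 * (2*x + 1) * (4 * (x + 1 + 2*y) * franel_alt_term n k / (8 * (2*y + 1)))"
    using pos by simp
  moreover have "closed_form_summand n k = franel_alt_term n k * (x * (y - x)) / (8 * (2*y + 1))"
    unfolding closed_form_summand_def x_def y_def ..
  ultimately show ?thesis unfolding x_def[symmetric] using pos
    by (simp add: field_simps) algebra
qed

definition weighted_franel_sum :: "nat \<Rightarrow> rat" where
  "weighted_franel_sum n = (\<Sum>m<n. (3 * of_nat m + 1) * (-16) ^ (n - m - 1) * of_nat (2*m choose m) * of_nat (franel m))"

definition closed_form :: "nat \<Rightarrow> rat" where
  "closed_form n = of_nat (2*n choose n) * (\<Sum>k<n. closed_form_summand n k)"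

lemma weighted_franel_sum_step:
  "weighted_franel_sum (n+1) = -16 * weighted_franel_sum n + (3 * of_nat n + 1) * of_nat (2*n choose n) * of_nat (franel n)"
proof -
  have "(\<Sum>m<n. (3 * of_nat m + 1) * (-16) ^ (n + 1 - m - 1) * of_nat (2*m choose m) * of_nat (franel m))
      = (\<Sum>m<n. -16 * ((3 * of_nat m + 1) * (-16) ^ (n - m - 1) * of_nat (2*m choose m) * (of_nat (franel m) :: rat)))"
  proof (rule sum.cong[OF refl])
    fix m assume "m \<in> {..<n}"
    then have "n + 1 - m - 1 = Suc (n - m - 1)" by auto
    then show "(3 * of_nat m + 1) * (-16) ^ (n + 1 - m - 1) * of_nat (2*m choose m) * of_nat (franel m)
       = -16 * ((3 * of_nat m + 1) * (-16) ^ (n - m - 1) * of_nat (2*m choose m) * (of_nat (franel m) :: rat))"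
      by simp
  qed
  then show ?thesis unfolding weighted_franel_sum_def by (simp add: sum_distrib_left)
qed

lemma closed_form_step:
  "closed_form (n+1) = -16 * closed_form n + (3 * of_nat n + 1) * of_nat (2*n choose n) * of_nat (franel n)"
proof -
  define C where "C = (of_nat (2*n choose n) :: rat)"
  define c where "c = 2 * (2*of_nat n + 1) / (of_nat n + 1 :: rat)"
  have next_sum: "closed_form (n+1) = C * (\<Sum>k\<le>n. c * closed_form_summand (n+1) k)"
    unfolding closed_form_def central_binomial_step C_def[symmetric] c_def[symmetric]
    by (simp add: lessThan_Suc_atMost sum_distrib_left ac_simps)
  have "closed_form n = C * (\<Sum>k\<le>n. closed_form_summand n k)"
    unfolding closed_form_def C_def by (simp add: lessThan_Suc_atMost[symmetric] closed_form_summand_def)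
  then have "closed_form (n+1) + 16 * closed_form n
      = C * (\<Sum>k\<le>n. c * closed_form_summand (n+1) k + 16 * closed_form_summand n k)"
    unfolding next_sum by (simp add: sum.distrib sum_distrib_left algebra_simps)
  also have "\<dots> = (3 * of_nat n + 1) * C * of_nat (franel n)"
    unfolding c_def closed_form_summand_step franel_alt_sum sum_distrib_left[symmetric] by (simp only: ac_simps)
  finally show ?thesis unfolding C_def by (simp add: algebra_simps)
qed

lemma weighted_franel_sum_closed_form: "weighted_franel_sum n = closed_form n"
proof (induction n)
  case 0 show ?case by (simp add: weighted_franel_sum_def closed_form_def)
next
  case (Suc n) then show ?case using weighted_franel_sum_step[of n] closed_form_step[of n] by simp
qed

theorem mainTheorem6:
  fixes n :: nat
  assumes "n \<ge> 1"
  shows "(\<Sum>m=0..n-1. (3 * of_nat m + 1) * (-16) ^ (n - m - 1) * of_nat (2*m choose m) * of_nat (franel m))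
       = of_nat (2*n choose n) * (\<Sum>k=0..n-1. of_nat (n + 2*k choose 3*k) * of_nat (3*k choose k) * of_nat (2*k choose k)
            * (of_nat n * (of_nat k - of_nat n) * (-4) ^ (n - k)) / (8 * (2 * of_nat k + 1)) :: rat)"
proof -
  have range: "{0..n-1} = {..<n}" using assms by auto
  have summand: "of_nat (n + 2*k choose 3*k) * of_nat (3*k choose k) * of_nat (2*k choose k)
      * (of_nat n * (of_nat k - of_nat n) * (-4) ^ (n - k)) / (8 * (2 * of_nat k + 1)) = closed_form_summand n k" for k
    unfolding closed_form_summand_def franel_alt_term_def by (simp add: algebra_simps)
  show ?thesis using weighted_franel_sum_closed_form[of n]
    unfolding range summand weighted_franel_sum_def closed_form_def .
qed

end
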